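(* Let $r\ge 1$ be an integer and let $G$ be an $r$-regular finite simple graph of order $n$. Then $$\gamma^{0}_{st}(G)=n-2\,\gamma_{\times\lceil r/2\rceil,t}(G).$$
   Context: For a vertex $v$ of a graph $G=(V,E)$, $N(v)$ is its open neighborhood, and for $f:V\to\mathbb{R}$ and $B\subseteq V$ write $f(B)=\sum_{v\in B}f(v)$; $f(V)$ is the weight of $f$. An inverse signed total dominating function (ISTDF) of $G$ is a function $f:V\to\{-1,1\}$ such that $f(N(v))\le 0$ for every $v\in V$; $\gamma^{0}_{st}(G)$ is the maximum weight of an ISTDF of $G$. For an integer $1\le k\le \delta(G)$, a $k$-tuple total dominating set of $G$ is a set $D\subseteq V$ with $|N(v)\cap D|\ge k$ for all $v\in V$; $\gamma_{\times k,t}(G)$ is the minimum cardinality of a $k$-tuple total dominating set. *)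

theory Defs
  imports Complex_Main
begin

definition simple_graph :: "'a set \<Rightarrow> ('a \<Rightarrow> 'a \<Rightarrow> bool) \<Rightarrow> bool" where
  "simple_graph V E \<longleftrightarrow> finite V \<and> (\<forall>u v. E u v \<longrightarrow> u \<in> V \<and> v \<in> V)
     \<and> (\<forall>u v. E u v \<longrightarrow> E v u) \<and> (\<forall>v. \<not> E v v)"

definition nbhd :: "'a set \<Rightarrow> ('a \<Rightarrow> 'a \<Rightarrow> bool) \<Rightarrow> 'a \<Rightarrow> 'a set" where
  "nbhd V E v = {u \<in> V. E v u}"

definition regular :: "'a set \<Rightarrow> ('a \<Rightarrow> 'a \<Rightarrow> bool) \<Rightarrow> nat \<Rightarrow> bool" where
  "regular V E r \<longleftrightarrow> (\<forall>v\<in>V. card (nbhd V E v) = r)"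

definition istdf :: "'a set \<Rightarrow> ('a \<Rightarrow> 'a \<Rightarrow> bool) \<Rightarrow> ('a \<Rightarrow> int) \<Rightarrow> bool" where
  "istdf V E f \<longleftrightarrow> (\<forall>v\<in>V. f v \<in> {-1, 1}) \<and> (\<forall>v\<in>V. sum f (nbhd V E v) \<le> 0)"

definition inv_signed_total_dom :: "'a set \<Rightarrow> ('a \<Rightarrow> 'a \<Rightarrow> bool) \<Rightarrow> int" where
  "inv_signed_total_dom V E = Max {sum f V | f. istdf V E f}"

definition k_tuple_total_dom_set :: "'a set \<Rightarrow> ('a \<Rightarrow> 'a \<Rightarrow> bool) \<Rightarrow> nat \<Rightarrow> 'a set \<Rightarrow> bool" where
  "k_tuple_total_dom_set V E k D \<longleftrightarrow> D \<subseteq> V \<and> (\<forall>v\<in>V. card (nbhd V E v \<inter> D) \<ge> k)"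

definition k_tuple_total_dom :: "'a set \<Rightarrow> ('a \<Rightarrow> 'a \<Rightarrow> bool) \<Rightarrow> nat \<Rightarrow> nat" where
  "k_tuple_total_dom V E k = Min {card D | D. k_tuple_total_dom_set V E k D}"

end

theory Submission
  imports Defs
begin

text \<open>Every ISTDF is the signing of the set D of vertices where it is -1, and in an
  r-regular graph the condition f(N(v)) \<le> 0 for this signing says exactly that
  r - 2|N(v) \<inter> D| \<le> 0, i.e. that D is a \<lceil>r/2\<rceil>-tuple total dominating set.
  The weight of the signing is n - 2|D|, so maximising the weight means minimising |D|.\<close>

definition signing :: "'a set \<Rightarrow> 'a \<Rightarrow> int" where
  "signing D v = (if v \<in> D then -1 else 1)"

lemma sum_signing:
  assumes "finite A"
  shows "sum (signing D) A = int (card A) - 2 * int (card (A \<inter> D))"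
  using assms
proof (induction A rule: finite_induct)
  case empty
  then show ?case by simp
next
  case (insert x F)
  have "insert x F \<inter> D = (if x \<in> D then insert x (F \<inter> D) else F \<inter> D)" by auto
  with insert show ?case by (auto simp: signing_def card_insert_if)
qed

lemma nat_ceiling_half: "nat \<lceil>real r / 2\<rceil> = (r + 1) div 2"
proof -
  have "\<lceil>real r / 2\<rceil> = int ((r + 1) div 2)"
    by (rule ceiling_unique) (cases "even r"; auto elim!: evenE oddE simp: field_simps)+
  then show ?thesis by simp
qed

lemma Max_image_antimono:
  fixes g :: "'a::linorder \<Rightarrow> 'b::linorder"
  assumes "antimono g" "finite S" "S \<noteq> {}"
  shows "Max (g ` S) = g (Min S)"
proof (rule Max_eqI)
  show "y \<le> g (Min S)" if "y \<in> g ` S" for y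
    using that assms by (auto intro: antimonoD)
  show "g (Min S) \<in> g ` S"
    using Min_in[OF assms(2,3)] by blast
qed (use assms in simp)

lemma istdf_eq_signing:
  assumes "istdf V E f" "v \<in> V"
  shows "f v = signing {u \<in> V. f u = -1} v"
  using assms by (auto simp: istdf_def signing_def)

lemma istdf_cong:
  assumes "\<forall>v\<in>V. f v = g v"
  shows "istdf V E f \<longleftrightarrow> istdf V E g"
proof -
  have "sum f (nbhd V E v) = sum g (nbhd V E v)" for v
    using assms by (intro sum.cong) (auto simp: nbhd_def)
  then show ?thesis
    using assms by (auto simp: istdf_def)
qed

lemma istdf_signing_iff_tuple_total_dom_set:
  assumes "finite V" "regular V E r" "D \<subseteq> V"
  shows "istdf V E (signing D) \<longleftrightarrow> k_tuple_total_dom_set V E (nat \<lceil>real r / 2\<rceil>) D"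
proof -
  have "sum (signing D) (nbhd V E v) = int r - 2 * int (card (nbhd V E v \<inter> D))" if "v \<in> V" for v
    using sum_signing[of "nbhd V E v" D] assms(1,2) that by (simp add: nbhd_def regular_def)
  then show ?thesis
    using assms(3) by (auto simp: istdf_def signing_def k_tuple_total_dom_set_def nat_ceiling_half)
qed

lemma istdf_weights:
  assumes "finite V" "regular V E r"
  shows "{sum f V | f. istdf V E f}
    = (\<lambda>c. int (card V) - 2 * int c) ` {card D | D. k_tuple_total_dom_set V E (nat \<lceil>real r / 2\<rceil>) D}"
    (is "?weights = ?image")
proof
  show "?weights \<subseteq> ?image"
  proof
    fix w assume "w \<in> ?weights"
    then obtain f where f: "istdf V E f" "w = sum f V" by blast
    define D where "D = {u \<in> V. f u = -1}"
    have agree: "\<forall>v\<in>V. f v = signing D v"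
      using istdf_eq_signing[OF f(1)] by (simp add: D_def)
    have "k_tuple_total_dom_set V E (nat \<lceil>real r / 2\<rceil>) D"
      using f(1) istdf_cong[OF agree] istdf_signing_iff_tuple_total_dom_set[OF assms]
      by (simp add: D_def)
    moreover have "w = int (card V) - 2 * int (card D)"
      using f(2) sum.cong[OF refl, of V f "signing D"] agree sum_signing[OF assms(1), of D]
      by (simp add: D_def Int_absorb1)
    ultimately show "w \<in> ?image" by blast
  qed
  show "?image \<subseteq> ?weights"
  proof
    fix w assume "w \<in> ?image"
    then obtain D where D: "k_tuple_total_dom_set V E (nat \<lceil>real r / 2\<rceil>) D"
      "w = int (card V) - 2 * int (card D)" by blast
    have "D \<subseteq> V" using D(1) by (simp add: k_tuple_total_dom_set_def)
    then have "istdf V E (signing D)" "w = sum (signing D) V"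
      using D istdf_signing_iff_tuple_total_dom_set[OF assms] sum_signing[OF assms(1), of D]
      by (simp_all add: Int_absorb1)
    then show "w \<in> ?weights" by blast
  qed
qed

lemma tuple_total_dom_set_vertex_set:
  assumes "regular V E r" "k \<le> r"
  shows "k_tuple_total_dom_set V E k V"
proof -
  have "nbhd V E v \<inter> V = nbhd V E v" for v by (auto simp: nbhd_def)
  then show ?thesis using assms by (simp add: k_tuple_total_dom_set_def regular_def)
qed

theorem mainTheorem5:
  fixes V :: "'a set" and E :: "'a \<Rightarrow> 'a \<Rightarrow> bool" and r n :: nat
  assumes "simple_graph V E" and "regular V E r" and "r \<ge> 1" and "card V = n"
  shows "inv_signed_total_dom V E
           = int n - 2 * int (k_tuple_total_dom V E (nat \<lceil>real r / 2\<rceil>))"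
proof -
  define k where "k = nat \<lceil>real r / 2\<rceil>"
  define sizes where "sizes = {card D | D. k_tuple_total_dom_set V E k D}"
  have fin: "finite V" using assms(1) by (simp add: simple_graph_def)
  have "sizes \<subseteq> card ` Pow V" by (auto simp: sizes_def k_tuple_total_dom_set_def)
  then have "finite sizes" using fin finite_subset by blast
  moreover have "k \<le> r" by (simp add: k_def nat_ceiling_half)
  then have "sizes \<noteq> {}"
    using tuple_total_dom_set_vertex_set[OF assms(2)] by (auto simp: sizes_def)
  moreover have "antimono (\<lambda>c. int n - 2 * int c)" by (auto intro: antimonoI)
  ultimately have "Max ((\<lambda>c. int n - 2 * int c) ` sizes) = int n - 2 * int (Min sizes)"
    using Max_image_antimono by blast
  then show ?thesis
    using istdf_weights[OF fin assms(2)] assms(4)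
    by (simp add: inv_signed_total_dom_def k_tuple_total_dom_def sizes_def k_def)
qed

end
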